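(* For $m,n\in\mathbb N$ and $k=\min\{m,n\}$, the expected value of $\|G\|$ for a random bipartite graph $G\in\mathcal G(m,n,1/2)$ satisfies \[\mathbb E_{m,n,1/2}(\|G\|)\ge\frac18\sqrt{\frac k2}-1.\]
   Context: $\mathcal G(m,n,p)$ is the probability space of bipartite graphs $G\subseteq\{r_1,\dots,r_m\}\times\{c_1,\dots,c_n\}$ in which each of the $mn$ possible edges is present independently with probability $p$. The biadjacency matrix $M(G)$ is the $m\times n$ $0$–$1$ matrix with $(i,j)$ entry $1$ iff $(r_i,c_j)$ is an edge, and $\|G\|=\|M(G)\|_\bullet=\sup\{\|M(G)\bullet X\|:X\in M_{m,n}(\mathbb F),\|X\|\le1\}$ is the Schur norm (entrywise product, operator norm $\ell^2_n\to\ell^2_m$, $\mathbb F\in\{\mathbb R,\mathbb C\}$). *)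

theory Defs
  imports "HOL-Analysis.Analysis"
begin

text \<open>Vectors in F^n are functions nat => F, only indices < n matter;
  m x n matrices are functions nat => nat => F, only indices i < m, j < n matter.\<close>

definition l2norm :: "nat \<Rightarrow> (nat \<Rightarrow> 'a::real_normed_field) \<Rightarrow> real" where
  "l2norm n x = sqrt (\<Sum>j<n. (norm (x j))^2)"

definition mat_apply :: "nat \<Rightarrow> (nat \<Rightarrow> nat \<Rightarrow> 'a::real_normed_field) \<Rightarrow> (nat \<Rightarrow> 'a) \<Rightarrow> (nat \<Rightarrow> 'a)" where
  "mat_apply n A x = (\<lambda>i. \<Sum>j<n. A i j * x j)"

definition mat_opnorm :: "nat \<Rightarrow> nat \<Rightarrow> (nat \<Rightarrow> nat \<Rightarrow> 'a::real_normed_field) \<Rightarrow> real" where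
  "mat_opnorm m n A = Sup {l2norm m (mat_apply n A x) | x. l2norm n x \<le> 1}"

definition schur_prod :: "(nat \<Rightarrow> nat \<Rightarrow> 'a::real_normed_field) \<Rightarrow> (nat \<Rightarrow> nat \<Rightarrow> 'a) \<Rightarrow> (nat \<Rightarrow> nat \<Rightarrow> 'a)" where
  "schur_prod M X = (\<lambda>i j. M i j * X i j)"

definition schur_norm :: "nat \<Rightarrow> nat \<Rightarrow> (nat \<Rightarrow> nat \<Rightarrow> 'a::real_normed_field) \<Rightarrow> real" where
  "schur_norm m n M = Sup {mat_opnorm m n (schur_prod M X) | X. mat_opnorm m n X \<le> 1}"

text \<open>A bipartite graph G on rows r_0..r_{m-1} and columns c_0..c_{n-1} is its edge set
  E \<subseteq> {..<m} \<times> {..<n}; its biadjacency matrix:\<close>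
definition biadj :: "(nat \<times> nat) set \<Rightarrow> nat \<Rightarrow> nat \<Rightarrow> 'a::real_normed_field" where
  "biadj E i j = (if (i, j) \<in> E then 1 else 0)"

definition graph_norm :: "nat \<Rightarrow> nat \<Rightarrow> (nat \<times> nat) set \<Rightarrow> 'a::real_normed_field itself \<Rightarrow> real" where
  "graph_norm m n E _ = schur_norm m n (biadj E :: nat \<Rightarrow> nat \<Rightarrow> 'a)"

definition expect_G :: "nat \<Rightarrow> nat \<Rightarrow> real \<Rightarrow> ((nat \<times> nat) set \<Rightarrow> real) \<Rightarrow> real" where
  "expect_G m n p f = (\<Sum>E \<in> Pow ({..<m} \<times> {..<n}).
      p ^ card E * (1 - p) ^ (m * n - card E) * f E)"

end

theory Submission
  imports Defs "Jordan_Normal_Form.Determinant"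
begin

text \<open>Restrict to a \<open>k \<times> k\<close> block and write the biadjacency matrix as \<open>M = (J + S) / 2\<close>
  with the sign matrix \<open>S\<close>. For \<open>s > 0\<close> the matrix \<open>X = 2 s S (s\<^sup>2 I + S\<^sup>T S)\<^sup>-\<^sup>1\<close> is a
  contraction, since \<open>2 s t \<le> s\<^sup>2 + t\<^sup>2\<close> for every singular value \<open>t\<close> of \<open>S\<close>, so testing
  \<open>M \<bullet> X\<close> against the normalised all-ones vector gives \<open>\<parallel>G\<parallel> \<ge> (\<Sum> M\<^sub>i\<^sub>j X\<^sub>i\<^sub>j) / k\<close>.
  Here \<open>\<Sum> X\<^sub>i\<^sub>j \<ge> -k\<close>, and expanding the resolvent to second order gives
  \<open>\<Sum> S\<^sub>i\<^sub>j X\<^sub>i\<^sub>j \<ge> 2 k\<^sup>2 / s - 2 tr ((S\<^sup>T S)\<^sup>2) / s\<^sup>3\<close>. The signs are independent and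
  symmetric, so \<open>E tr ((S\<^sup>T S)\<^sup>2) \<le> 2 k\<^sup>3\<close>; averaging with \<open>s = 4 sqrt (k / 2)\<close> yields
  \<open>E \<parallel>G\<parallel> \<ge> 3/8 sqrt (k / 2) - 1/2\<close>.\<close>

section \<open>Real matrices on the index range \<open>{..<k}\<close>\<close>

definition dot :: "nat \<Rightarrow> (nat \<Rightarrow> real) \<Rightarrow> (nat \<Rightarrow> real) \<Rightarrow> real" where
  "dot k x y = (\<Sum>j<k. x j * y j)"

definition mat_mult :: "nat \<Rightarrow> (nat \<Rightarrow> nat \<Rightarrow> 'a::real_normed_field) \<Rightarrow> (nat \<Rightarrow> nat \<Rightarrow> 'a) \<Rightarrow> nat \<Rightarrow> nat \<Rightarrow> 'a" where
  "mat_mult k A B = (\<lambda>i l. \<Sum>j<k. A i j * B j l)"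

definition mat_transpose :: "(nat \<Rightarrow> nat \<Rightarrow> 'a) \<Rightarrow> nat \<Rightarrow> nat \<Rightarrow> 'a" where
  "mat_transpose A = (\<lambda>i j. A j i)"

definition gram :: "nat \<Rightarrow> (nat \<Rightarrow> nat \<Rightarrow> real) \<Rightarrow> nat \<Rightarrow> nat \<Rightarrow> real" where
  "gram k S = mat_mult k (mat_transpose S) S"

definition shifted_gram :: "nat \<Rightarrow> (nat \<Rightarrow> nat \<Rightarrow> real) \<Rightarrow> real \<Rightarrow> nat \<Rightarrow> nat \<Rightarrow> real" where
  "shifted_gram k S c = (\<lambda>i j. (if i = j then c else 0) + gram k S i j)"

lemma dot_commute: "dot k x y = dot k y x"
  unfolding dot_def by (simp add: mult.commute)

lemma dot_lincomb_left: "dot k (\<lambda>i. a * u i + b * v i) w = a * dot k u w + b * dot k v w"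
  unfolding dot_def by (simp add: algebra_simps sum.distrib sum_distrib_left)

lemma dot_lincomb_right: "dot k w (\<lambda>i. a * u i + b * v i) = a * dot k w u + b * dot k w v"
  using dot_lincomb_left[of k a u b v w] by (simp add: dot_commute)

lemma dot_self_lincomb:
  "dot k (\<lambda>i. a * u i + b * v i) (\<lambda>i. a * u i + b * v i)
     = a\<^sup>2 * dot k u u + 2 * a * b * dot k u v + b\<^sup>2 * dot k v v"
  by (simp add: dot_lincomb_left dot_lincomb_right dot_commute[of k v u] power2_eq_square algebra_simps)

lemma dot_self_scale: "dot k (\<lambda>i. a * u i) (\<lambda>i. a * u i) = a\<^sup>2 * dot k u u"
  unfolding dot_def by (simp add: power2_eq_square sum_distrib_left mult_ac)

lemma dot_self_nonneg: "0 \<le> dot k x x"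
  unfolding dot_def by (simp add: sum_nonneg)

lemma dot_cong:
  "(\<And>i. i < k \<Longrightarrow> x i = x' i) \<Longrightarrow> (\<And>i. i < k \<Longrightarrow> y i = y' i) \<Longrightarrow> dot k x y = dot k x' y'"
  unfolding dot_def by (rule sum.cong) auto

lemma sum_kronecker_mult:
  fixes f :: "nat \<Rightarrow> 'a::semiring_0"
  assumes "i < k"
  shows "(\<Sum>j<k. (if i = j then a else 0) * f j) = a * f i"
proof -
  have "(\<Sum>j<k. (if i = j then a else 0) * f j) = (\<Sum>j<k. if i = j then a * f j else 0)"
    by (rule sum.cong) auto
  then show ?thesis using assms by simp
qed

lemma dot_unit_left:
  assumes "l < k"
  shows "dot k (\<lambda>i. if l = i then 1 else 0) y = y l"
  using sum_kronecker_mult[OF assms, of 1 y] unfolding dot_def by simp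

lemma mat_apply_lincomb:
  fixes A :: "nat \<Rightarrow> nat \<Rightarrow> 'a::real_normed_field"
  shows "mat_apply k A (\<lambda>i. a * u i + b * v i) = (\<lambda>i. a * mat_apply k A u i + b * mat_apply k A v i)"
  unfolding mat_apply_def by (simp add: algebra_simps sum.distrib sum_distrib_left)

lemma mat_apply_cong: "(\<And>i. i < k \<Longrightarrow> x i = x' i) \<Longrightarrow> mat_apply k A x = mat_apply k A x'"
  unfolding mat_apply_def by (intro ext sum.cong) auto

lemma mat_apply_unit:
  assumes "l < k"
  shows "mat_apply k A (\<lambda>j. if l = j then 1 else 0) i = A i l"
  using sum_kronecker_mult[OF assms, of 1 "A i"] unfolding mat_apply_def
  by (simp add: mult.commute)

lemma mat_apply_mat_mult: "mat_apply k (mat_mult k A B) x = mat_apply k A (mat_apply k B x)"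
proof (rule ext)
  fix i
  have "(\<Sum>l<k. (\<Sum>j<k. A i j * B j l) * x l) = (\<Sum>l<k. \<Sum>j<k. A i j * B j l * x l)"
    by (simp add: sum_distrib_right)
  also have "\<dots> = (\<Sum>j<k. \<Sum>l<k. A i j * B j l * x l)" by (rule sum.swap)
  also have "\<dots> = (\<Sum>j<k. A i j * (\<Sum>l<k. B j l * x l))" by (simp add: sum_distrib_left mult.assoc)
  finally show "mat_apply k (mat_mult k A B) x i = mat_apply k A (mat_apply k B x) i"
    unfolding mat_apply_def mat_mult_def by simp
qed

lemma dot_mat_apply: "dot k u (mat_apply k A v) = dot k (mat_apply k (mat_transpose A) u) v"
proof -
  have "(\<Sum>i<k. u i * (\<Sum>j<k. A i j * v j)) = (\<Sum>i<k. \<Sum>j<k. A i j * u i * v j)"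
    by (simp add: sum_distrib_left mult.assoc mult.left_commute)
  also have "\<dots> = (\<Sum>j<k. \<Sum>i<k. A i j * u i * v j)" by (rule sum.swap)
  also have "\<dots> = (\<Sum>j<k. (\<Sum>i<k. A i j * u i) * v j)" by (simp add: sum_distrib_right)
  finally show ?thesis unfolding mat_apply_def dot_def mat_transpose_def by simp
qed

lemma dot_mat_apply_ge_neg:
  assumes "dot k (mat_apply k X x) (mat_apply k X x) \<le> dot k x x"
  shows "- dot k x x \<le> dot k x (mat_apply k X x)"
  using dot_self_nonneg[of k "\<lambda>i. 1 * x i + 1 * mat_apply k X x i"] assms
  unfolding dot_self_lincomb by simp

lemma gram_symmetric: "gram k S j l = gram k S l j"
  unfolding gram_def mat_mult_def mat_transpose_def by (simp add: mult.commute)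

lemma mat_apply_gram: "mat_apply k (gram k S) y = mat_apply k (mat_transpose S) (mat_apply k S y)"
  unfolding gram_def by (rule mat_apply_mat_mult)

lemma dot_gram: "dot k y (mat_apply k (gram k S) y) = dot k (mat_apply k S y) (mat_apply k S y)"
  by (simp add: mat_apply_gram dot_mat_apply mat_transpose_def)

lemma dot_gram_commute: "dot k u (mat_apply k (gram k S) v) = dot k (mat_apply k (gram k S) u) v"
proof -
  have "mat_transpose (gram k S) = gram k S"
    by (auto simp: mat_transpose_def gram_symmetric)
  then show ?thesis by (metis dot_mat_apply)
qed

lemma mat_apply_shifted_gram:
  assumes "i < k"
  shows "mat_apply k (shifted_gram k S c) y i = c * y i + mat_apply k (gram k S) y i"
  using sum_kronecker_mult[OF assms, of c y]
  by (simp add: shifted_gram_def mat_apply_def distrib_right sum.distrib)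

lemma right_inverse_if_injective:
  fixes Q :: "nat \<Rightarrow> nat \<Rightarrow> 'a::field"
  assumes inj: "\<And>z. \<forall>i<k. (\<Sum>j<k. Q i j * z j) = 0 \<Longrightarrow> \<forall>j<k. z j = 0"
  shows "\<exists>R. \<forall>i<k. \<forall>l<k. (\<Sum>j<k. Q i j * R j l) = (if i = l then 1 else 0)"
proof -
  define A where "A = mat k k (\<lambda>(i,j). Q i j)"
  have A: "A \<in> carrier_mat k k" unfolding A_def by simp
  have "det A \<noteq> 0"
  proof
    assume "det A = 0"
    then obtain v where v: "v \<in> carrier_vec k" "v \<noteq> 0\<^sub>v k" "A *\<^sub>v v = 0\<^sub>v k"
      using det_0_iff_vec_prod_zero_field[OF A] by blast
    have "\<forall>i<k. (\<Sum>j<k. Q i j * v $ j) = 0"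
    proof (intro allI impI)
      fix i assume i: "i < k"
      have "(A *\<^sub>v v) $ i = 0" using v(3) i by simp
      then show "(\<Sum>j<k. Q i j * v $ j) = 0" using i v(1)
        by (simp add: A_def mult_mat_vec_def scalar_prod_def row_def atLeast0LessThan)
    qed
    then have "v = 0\<^sub>v k" using inj v(1) by auto
    with v(2) show False by simp
  qed
  then have "A \<in> Units (ring_mat TYPE('a) k ())" by (rule det_non_zero_imp_unit[OF A])
  then obtain B where B: "B \<in> carrier_mat k k" "A * B = 1\<^sub>m k"
    by (auto simp: Units_def ring_mat_def)
  show ?thesis
  proof (intro exI allI impI)
    fix i l assume "i < k" "l < k"
    moreover have "(A * B) $$ (i,l) = 1\<^sub>m k $$ (i,l)" using B by simp
    ultimately show "(\<Sum>j<k. Q i j * B $$ (j,l)) = (if i = l then 1 else 0)"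
      using B(1) by (simp add: A_def scalar_prod_def row_def col_def atLeast0LessThan)
  qed
qed

definition contraction :: "nat \<Rightarrow> (nat \<Rightarrow> nat \<Rightarrow> 'a::real_normed_field) \<Rightarrow> bool" where
  "contraction k X \<longleftrightarrow> (\<forall>x. l2norm k (mat_apply k X x) \<le> l2norm k x)"

lemma l2norm_eq_sqrt_dot: "l2norm k x = sqrt (dot k x x)"
  by (simp add: l2norm_def dot_def power2_eq_square)

lemma contraction_real_iff:
  "contraction k X \<longleftrightarrow> (\<forall>x. dot k (mat_apply k X x) (mat_apply k X x) \<le> dot k x x)"
  by (simp add: contraction_def l2norm_eq_sqrt_dot)

lemma contraction_of_real_complex:
  assumes "contraction k X"
  shows "contraction k (\<lambda>i j. complex_of_real (X i j))"
  unfolding contraction_def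
proof
  fix x :: "nat \<Rightarrow> complex"
  let ?a = "\<lambda>j. Re (x j)" and ?b = "\<lambda>j. Im (x j)"
  have X: "dot k (mat_apply k X y) (mat_apply k X y) \<le> dot k y y" for y
    using assms by (simp add: contraction_real_iff)
  have "(\<Sum>i<k. (norm (mat_apply k (\<lambda>i j. complex_of_real (X i j)) x i))\<^sup>2)
      = (\<Sum>i<k. (mat_apply k X ?a i)\<^sup>2 + (mat_apply k X ?b i)\<^sup>2)"
    by (intro sum.cong refl) (simp add: cmod_power2 Re_sum Im_sum mat_apply_def)
  also have "\<dots> = dot k (mat_apply k X ?a) (mat_apply k X ?a) + dot k (mat_apply k X ?b) (mat_apply k X ?b)"
    by (simp add: dot_def sum.distrib power2_eq_square)
  also have "\<dots> \<le> dot k ?a ?a + dot k ?b ?b"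
    using X by (intro add_mono)
  also have "\<dots> = (\<Sum>j<k. (norm (x j))\<^sup>2)"
    unfolding cmod_power2 dot_def by (simp add: sum.distrib power2_eq_square)
  finally show "l2norm k (mat_apply k (\<lambda>i j. complex_of_real (X i j)) x) \<le> l2norm k x"
    unfolding l2norm_def by (rule real_sqrt_le_mono)
qed

lemma contraction_sum_ge:
  fixes X :: "nat \<Rightarrow> nat \<Rightarrow> real"
  assumes "contraction k X"
  shows "- real k \<le> (\<Sum>i<k. \<Sum>j<k. X i j)"
proof -
  have "- dot k (\<lambda>_. 1) (\<lambda>_. 1) \<le> dot k (\<lambda>_. 1) (mat_apply k X (\<lambda>_. 1))"
    using assms by (intro dot_mat_apply_ge_neg) (simp add: contraction_real_iff)
  then show ?thesis by (simp add: dot_def mat_apply_def)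
qed

section \<open>The resolvent contraction\<close>

text \<open>Here \<open>X = 2 s S (s\<^sup>2 I + S\<^sup>T S)\<^sup>-\<^sup>1\<close>, with \<open>R\<close> the inverse.\<close>
locale resolvent =
  fixes k :: nat and S R :: "nat \<Rightarrow> nat \<Rightarrow> real" and s :: real
  assumes s_pos: "0 < s"
    and right_inverse: "\<And>i l. i < k \<Longrightarrow> l < k \<Longrightarrow>
      mat_mult k (shifted_gram k S (s\<^sup>2)) R i l = (if i = l then 1 else 0)"
begin

definition X :: "nat \<Rightarrow> nat \<Rightarrow> real" where
  "X = (\<lambda>i l. 2 * s * mat_mult k S R i l)"

lemma right_inverse_apply:
  assumes "i < k"
  shows "s\<^sup>2 * mat_apply k R x i + mat_apply k (gram k S) (mat_apply k R x) i = x i"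
proof -
  have "s\<^sup>2 * mat_apply k R x i + mat_apply k (gram k S) (mat_apply k R x) i
      = mat_apply k (mat_mult k (shifted_gram k S (s\<^sup>2)) R) x i"
    using assms by (simp add: mat_apply_shifted_gram mat_apply_mat_mult)
  also have "\<dots> = (\<Sum>l<k. (if i = l then 1 else 0) * x l)"
    unfolding mat_apply_def using assms right_inverse by (intro sum.cong) auto
  also have "\<dots> = x i"
    using assms by (simp add: sum_kronecker_mult)
  finally show ?thesis .
qed

text \<open>With \<open>y = R x\<close> and \<open>P = S\<^sup>T S\<close> one has \<open>x = s\<^sup>2 y + P y\<close>, so
  \<open>|x|\<^sup>2 - |X x|\<^sup>2 = |s\<^sup>2 y + P y|\<^sup>2 - 4 s\<^sup>2 \<langle>y, P y\<rangle> = |s\<^sup>2 y - P y|\<^sup>2\<close>.\<close>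
lemma contraction_X: "contraction k X"
  unfolding contraction_real_iff
proof
  fix x
  define y where "y = mat_apply k R x"
  define Py where "Py = mat_apply k (gram k S) y"
  have Xx: "mat_apply k X x = (\<lambda>i. (2 * s) * mat_apply k S y i)"
  proof -
    have "X = mat_mult k (\<lambda>i j. 2 * s * S i j) R"
      unfolding X_def mat_mult_def by (simp add: sum_distrib_left mult.assoc)
    then have "mat_apply k X x = mat_apply k (\<lambda>i j. 2 * s * S i j) y"
      by (simp add: mat_apply_mat_mult y_def)
    then show ?thesis by (simp add: mat_apply_def sum_distrib_left mult.assoc)
  qed
  have "dot k x x = dot k (\<lambda>i. s\<^sup>2 * y i + 1 * Py i) (\<lambda>i. s\<^sup>2 * y i + 1 * Py i)"
    by (rule dot_cong) (simp_all add: right_inverse_apply y_def Py_def)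
  also have "\<dots> = (s\<^sup>2)\<^sup>2 * dot k y y + 2 * s\<^sup>2 * dot k (mat_apply k S y) (mat_apply k S y) + dot k Py Py"
    unfolding dot_self_lincomb Py_def dot_gram by simp
  finally have x: "dot k x x = \<dots>" .
  have "0 \<le> dot k (\<lambda>i. (- s\<^sup>2) * y i + 1 * Py i) (\<lambda>i. (- s\<^sup>2) * y i + 1 * Py i)"
    by (rule dot_self_nonneg)
  also have "\<dots> = (s\<^sup>2)\<^sup>2 * dot k y y - 2 * s\<^sup>2 * dot k (mat_apply k S y) (mat_apply k S y) + dot k Py Py"
    unfolding dot_self_lincomb Py_def dot_gram by simp
  finally show "dot k (mat_apply k X x) (mat_apply k X x) \<le> dot k x x"
    unfolding x Xx dot_self_scale by (simp add: power2_eq_square)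
qed

lemma dot_gram_right_inverse_ge:
  "dot k e (mat_apply k (gram k S) e) / s\<^sup>2
     - dot k (mat_apply k (gram k S) e) (mat_apply k (gram k S) e) / s ^ 4
   \<le> dot k e (mat_apply k (gram k S) (mat_apply k R e))"
proof -
  let ?P = "mat_apply k (gram k S)"
  define z where "z = mat_apply k R e"
  define a where "a = dot k z (?P z)"
  define b where "b = dot k (?P z) (?P z)"
  define d where "d = dot k (?P z) (?P (?P z))"
  define f where "f = dot k (?P (?P z)) (?P (?P z))"
  have e: "dot k e w = dot k (\<lambda>i. s\<^sup>2 * z i + 1 * ?P z i) w" for w
    by (rule dot_cong) (simp_all add: right_inverse_apply z_def)
  have Pe: "?P e = (\<lambda>i. s\<^sup>2 * ?P z i + 1 * ?P (?P z) i)"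
    unfolding mat_apply_lincomb[symmetric]
    by (rule mat_apply_cong) (simp add: right_inverse_apply z_def)
  have d: "0 \<le> d" unfolding d_def dot_gram by (rule dot_self_nonneg)
  have f: "0 \<le> f" unfolding f_def by (rule dot_self_nonneg)
  have "dot k e (?P z) = s\<^sup>2 * a + b"
    unfolding e dot_lincomb_left a_def b_def by simp
  moreover have "dot k e (?P e) = s ^ 4 * a + 2 * s\<^sup>2 * b + d"
    unfolding e Pe dot_lincomb_left dot_lincomb_right a_def b_def d_def
    by (simp add: dot_gram_commute[of k z] power2_eq_square power4_eq_xxxx algebra_simps)
  moreover have "dot k (?P e) (?P e) = s ^ 4 * b + 2 * s\<^sup>2 * d + f"
    unfolding Pe dot_self_lincomb b_def d_def f_def by (simp add: power2_eq_square power4_eq_xxxx)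
  ultimately show ?thesis
    using s_pos d f unfolding z_def[symmetric]
    by (simp add: field_simps power2_eq_square power4_eq_xxxx)
qed

lemma column_dot_X_ge:
  assumes l: "l < k"
  shows "2 * s * (gram k S l l / s\<^sup>2 - (\<Sum>j<k. (gram k S j l)\<^sup>2) / s ^ 4) \<le> (\<Sum>i<k. S i l * X i l)"
proof -
  define e :: "nat \<Rightarrow> real" where "e = (\<lambda>j. if l = j then 1 else 0)"
  have Pe: "mat_apply k (gram k S) e = (\<lambda>j. gram k S j l)"
    using mat_apply_unit[OF l] by (auto simp: e_def)
  have Re: "mat_apply k R e = (\<lambda>j. R j l)"
    using mat_apply_unit[OF l] by (auto simp: e_def)
  have "(\<Sum>i<k. S i l * X i l) = 2 * s * (\<Sum>i<k. \<Sum>j<k. S i l * S i j * R j l)"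
    unfolding X_def mat_mult_def by (simp add: sum_distrib_left algebra_simps)
  also have "(\<Sum>i<k. \<Sum>j<k. S i l * S i j * R j l) = (\<Sum>j<k. gram k S l j * R j l)"
    unfolding gram_def mat_mult_def mat_transpose_def sum_distrib_right by (rule sum.swap)
  also have "\<dots> = dot k e (mat_apply k (gram k S) (mat_apply k R e))"
    using l unfolding Re by (simp add: e_def dot_unit_left mat_apply_def)
  finally have "(\<Sum>i<k. S i l * X i l) = 2 * s * dot k e (mat_apply k (gram k S) (mat_apply k R e))" .
  moreover have "dot k e (mat_apply k (gram k S) e) = gram k S l l"
    using l unfolding Pe by (simp add: e_def dot_unit_left)
  moreover have "dot k (mat_apply k (gram k S) e) (mat_apply k (gram k S) e) = (\<Sum>j<k. (gram k S j l)\<^sup>2)"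
    by (simp add: Pe dot_def power2_eq_square)
  ultimately show ?thesis
    using dot_gram_right_inverse_ge[of e] s_pos by (simp add: mult_left_mono)
qed

end

lemma resolvent_exists:
  assumes s: "0 < s"
  shows "\<exists>R. resolvent k S R s"
proof -
  let ?Q = "shifted_gram k S (s\<^sup>2)"
  have "\<forall>j<k. z j = 0" if Qz: "\<forall>i<k. (\<Sum>j<k. ?Q i j * z j) = 0" for z
  proof -
    have "dot k z (mat_apply k ?Q z) = dot k z (\<lambda>i. s\<^sup>2 * z i + 1 * mat_apply k (gram k S) z i)"
      by (intro dot_cong) (simp_all add: mat_apply_shifted_gram)
    moreover have "dot k z (mat_apply k ?Q z) = 0"
      using Qz by (simp add: dot_def mat_apply_def)
    ultimately have "s\<^sup>2 * dot k z z + dot k (mat_apply k S z) (mat_apply k S z) = 0"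
      by (simp only: dot_lincomb_right dot_gram)
    then have "dot k z z = 0"
      using s dot_self_nonneg[of k z] dot_self_nonneg[of k "mat_apply k S z"]
      by (smt (verit) mult_pos_pos zero_less_power)
    then show ?thesis
      unfolding dot_def by (subst (asm) sum_nonneg_eq_0_iff) auto
  qed
  then obtain R where R: "\<forall>i<k. \<forall>l<k. (\<Sum>j<k. ?Q i j * R j l) = (if i = l then 1 else 0)"
    using right_inverse_if_injective[of k ?Q] by blast
  have "resolvent k S R s"
    by unfold_locales (use s R in \<open>auto simp: mat_mult_def\<close>)
  then show ?thesis by blast
qed

lemma exists_contraction_trace_ge:
  assumes "0 < s"
  shows "\<exists>X. contraction k X \<and>
    2 * s * (\<Sum>l<k. gram k S l l / s\<^sup>2 - (\<Sum>j<k. (gram k S j l)\<^sup>2) / s ^ 4)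
      \<le> (\<Sum>l<k. \<Sum>i<k. S i l * X i l)"
proof -
  obtain R where "resolvent k S R s" using resolvent_exists[OF assms] ..
  then interpret resolvent k S R s .
  have "contraction k X"
    by (rule contraction_X)
  moreover have "2 * s * (\<Sum>l<k. gram k S l l / s\<^sup>2 - (\<Sum>j<k. (gram k S j l)\<^sup>2) / s ^ 4)
      \<le> (\<Sum>l<k. \<Sum>i<k. S i l * X i l)"
    unfolding sum_distrib_left by (rule sum_mono) (simp add: column_dot_X_ge)
  ultimately show ?thesis by blast
qed

section \<open>Operator norm and Schur norm\<close>

lemma l2norm_eq_L2_set: "l2norm n x = L2_set (\<lambda>j. norm (x j)) {..<n}"
  unfolding l2norm_def L2_set_def by simp

lemma l2norm_nonneg: "0 \<le> l2norm n x"
  unfolding l2norm_eq_L2_set by simp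

lemma l2norm_zero: "l2norm n (\<lambda>_. 0) = 0"
  by (simp add: l2norm_def)

lemma l2norm_mat_apply_le:
  "l2norm m (mat_apply n A x) \<le> (\<Sum>i<m. \<Sum>j<n. norm (A i j)) * l2norm n x"
proof -
  have "l2norm m (mat_apply n A x) \<le> (\<Sum>i<m. norm (mat_apply n A x i))"
    unfolding l2norm_eq_L2_set by (rule L2_set_le_sum) auto
  also have "\<dots> \<le> (\<Sum>i<m. \<Sum>j<n. norm (A i j) * l2norm n x)"
  proof (intro sum_mono)
    fix i
    have "norm (mat_apply n A x i) \<le> (\<Sum>j<n. norm (A i j * x j))"
      unfolding mat_apply_def by (rule norm_sum)
    also have "\<dots> \<le> (\<Sum>j<n. norm (A i j) * l2norm n x)"
    proof (intro sum_mono)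
      fix j assume "j \<in> {..<n}"
      then have "norm (x j) \<le> l2norm n x"
        unfolding l2norm_eq_L2_set by (intro member_le_L2_set) auto
      then show "norm (A i j * x j) \<le> norm (A i j) * l2norm n x"
        by (simp add: norm_mult mult_left_mono)
    qed
    finally show "norm (mat_apply n A x i) \<le> (\<Sum>j<n. norm (A i j) * l2norm n x)" .
  qed
  finally show ?thesis by (simp add: sum_distrib_right)
qed

lemma bdd_above_mat_opnorm_set: "bdd_above {l2norm m (mat_apply n A x) | x. l2norm n x \<le> 1}"
proof (rule bdd_aboveI)
  fix y assume "y \<in> {l2norm m (mat_apply n A x) | x. l2norm n x \<le> 1}"
  then obtain x where "y = l2norm m (mat_apply n A x)" "l2norm n x \<le> 1" by blast
  then show "y \<le> (\<Sum>i<m. \<Sum>j<n. norm (A i j))"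
    using l2norm_mat_apply_le[of m n A x] by (smt (verit) mult_left_le sum_nonneg norm_ge_zero)
qed

lemma l2norm_mat_apply_le_mat_opnorm:
  "l2norm n x \<le> 1 \<Longrightarrow> l2norm m (mat_apply n A x) \<le> mat_opnorm m n A"
  unfolding mat_opnorm_def by (rule cSup_upper) (use bdd_above_mat_opnorm_set in auto)

lemma mat_opnorm_le:
  assumes "\<And>x. l2norm n x \<le> 1 \<Longrightarrow> l2norm m (mat_apply n A x) \<le> b"
  shows "mat_opnorm m n A \<le> b"
  unfolding mat_opnorm_def
proof (rule cSup_least)
  show "{l2norm m (mat_apply n A x) | x. l2norm n x \<le> 1} \<noteq> {}"
    using l2norm_zero[of n] by (metis (mono_tags, lifting) empty_iff mem_Collect_eq zero_le_one)
qed (use assms in blast)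

lemma mat_opnorm_nonneg: "0 \<le> mat_opnorm m n A"
  by (rule order_trans[OF l2norm_nonneg l2norm_mat_apply_le_mat_opnorm[of n "\<lambda>_. 0"]]) (simp add: l2norm_zero)

lemma norm_entry_le_mat_opnorm:
  assumes "i < m" "j < n"
  shows "norm (A i j) \<le> mat_opnorm m n A"
proof -
  define e where "e = (\<lambda>l. if j = l then 1 else 0 :: 'a)"
  have "l2norm n e = sqrt (\<Sum>l<n. if j = l then 1 else 0)"
    unfolding l2norm_def e_def by (intro arg_cong[where f=sqrt] sum.cong) auto
  then have e: "l2norm n e = 1" using assms by simp
  have "norm (A i j) \<le> l2norm m (mat_apply n A e)"
    unfolding l2norm_eq_L2_set e_def mat_apply_unit[OF assms(2)]
    by (rule member_le_L2_set) (use assms in auto)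
  also have "\<dots> \<le> mat_opnorm m n A"
    using e by (intro l2norm_mat_apply_le_mat_opnorm) simp
  finally show ?thesis .
qed

lemma bdd_above_schur_norm_set:
  "bdd_above {mat_opnorm m n (schur_prod M X) | X. mat_opnorm m n X \<le> 1}"
proof (rule bdd_aboveI)
  fix y assume "y \<in> {mat_opnorm m n (schur_prod M X) | X. mat_opnorm m n X \<le> 1}"
  then obtain X where y: "y = mat_opnorm m n (schur_prod M X)" and X: "mat_opnorm m n X \<le> 1"
    by blast
  have "y \<le> (\<Sum>i<m. \<Sum>j<n. norm (schur_prod M X i j))"
    unfolding y by (intro mat_opnorm_le order_trans[OF l2norm_mat_apply_le] mult_left_le)
      (auto intro!: sum_nonneg)
  also have "\<dots> \<le> (\<Sum>i<m. \<Sum>j<n. norm (M i j))"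
  proof (intro sum_mono)
    fix i j assume "i \<in> {..<m}" "j \<in> {..<n}"
    then have "norm (X i j) \<le> 1" using norm_entry_le_mat_opnorm[of i m j n X] X by simp
    then show "norm (schur_prod M X i j) \<le> norm (M i j)"
      by (simp add: schur_prod_def norm_mult mult_left_le)
  qed
  finally show "y \<le> (\<Sum>i<m. \<Sum>j<n. norm (M i j))" .
qed

lemma mat_opnorm_schur_prod_le_schur_norm:
  "mat_opnorm m n X \<le> 1 \<Longrightarrow> mat_opnorm m n (schur_prod M X) \<le> schur_norm m n M"
  unfolding schur_norm_def by (rule cSup_upper) (use bdd_above_schur_norm_set in auto)

lemma schur_norm_nonneg: "0 \<le> schur_norm m n M"
proof -
  have "mat_opnorm m n (\<lambda>_ _. 0) \<le> 1"
    by (rule mat_opnorm_le) (simp add: mat_apply_def l2norm_zero)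
  then show ?thesis
    using mat_opnorm_schur_prod_le_schur_norm mat_opnorm_nonneg order_trans by blast
qed

lemma l2norm_mono: "k \<le> n \<Longrightarrow> l2norm k x \<le> l2norm n x"
  unfolding l2norm_def by (intro real_sqrt_le_mono sum_mono2) auto

lemma l2norm_zero_extension:
  assumes "k \<le> m"
  shows "l2norm m (\<lambda>i. if i < k then x i else 0) = l2norm k x"
proof -
  have "(\<Sum>i<m. (norm (if i < k then x i else 0))\<^sup>2) = (\<Sum>i<k. (norm (x i))\<^sup>2)"
    using assms by (intro sum.mono_neutral_cong_right) auto
  then show ?thesis by (simp add: l2norm_def)
qed

lemma mat_apply_zero_extension:
  assumes "k \<le> n"
  shows "mat_apply n (\<lambda>i j. if i < k \<and> j < k then A i j else 0) x
       = (\<lambda>i. if i < k then mat_apply k A x i else 0)"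
proof (rule ext)
  fix i
  have "(\<Sum>j<n. (if i < k \<and> j < k then A i j else 0) * x j) = (\<Sum>j<k. (if i < k then A i j else 0) * x j)"
    using assms by (intro sum.mono_neutral_cong_right) auto
  then show "mat_apply n (\<lambda>i j. if i < k \<and> j < k then A i j else 0) x i
      = (if i < k then mat_apply k A x i else 0)"
    by (simp add: mat_apply_def)
qed

lemma mat_opnorm_zero_extension_le_1:
  fixes X :: "nat \<Rightarrow> nat \<Rightarrow> 'a::real_normed_field"
  assumes "contraction k X" "k \<le> m" "k \<le> n"
  shows "mat_opnorm m n (\<lambda>i j. if i < k \<and> j < k then X i j else 0) \<le> 1"
proof (rule mat_opnorm_le)
  fix x :: "nat \<Rightarrow> 'a"
  assume "l2norm n x \<le> 1"
  moreover have "l2norm k (mat_apply k X x) \<le> l2norm k x"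
    using assms(1) by (simp add: contraction_def)
  ultimately show "l2norm m (mat_apply n (\<lambda>i j. if i < k \<and> j < k then X i j else 0) x) \<le> 1"
    using l2norm_mono[OF assms(3), of x]
    by (simp add: mat_apply_zero_extension l2norm_zero_extension assms(2,3))
qed

text \<open>Test the block against the normalised indicator vector of its first \<open>k\<close> columns.\<close>
lemma block_sum_le_mat_opnorm:
  fixes B :: "nat \<Rightarrow> nat \<Rightarrow> real"
  assumes k: "0 < k" "k \<le> m" "k \<le> n"
  shows "(\<Sum>i<k. \<Sum>j<k. B i j) / k
    \<le> mat_opnorm m n (\<lambda>i j. if i < k \<and> j < k then of_real (B i j) else 0 :: 'a::real_normed_field)"
proof -
  define u :: "nat \<Rightarrow> 'a" where "u = (\<lambda>j. of_real (1 / sqrt k))"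
  define v where "v = (\<lambda>j. if j < k then u j else 0)"
  define r where "r = (\<lambda>i. (\<Sum>j<k. B i j) / sqrt k)"
  have "l2norm n v = l2norm k u"
    unfolding v_def by (rule l2norm_zero_extension[OF k(3)])
  also have "\<dots> = 1"
    using k by (simp add: l2norm_def u_def norm_divide power_divide)
  finally have v: "l2norm n v = 1" .
  have Bv: "mat_apply k (\<lambda>i j. of_real (B i j)) v i = of_real (r i)" for i
  proof -
    have "mat_apply k (\<lambda>i j. of_real (B i j)) v = mat_apply k (\<lambda>i j. of_real (B i j)) u"
      by (rule mat_apply_cong) (simp add: v_def)
    then show ?thesis by (simp add: mat_apply_def u_def r_def sum_divide_distrib)
  qed
  have "(\<Sum>i<k. \<Sum>j<k. B i j) / k = (\<Sum>i<k. r i * (1 / sqrt k))"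
    using k by (simp add: r_def sum_divide_distrib)
  also have "\<dots> \<le> (\<Sum>i<k. \<bar>r i\<bar> * \<bar>1 / sqrt k\<bar>)"
    by (intro sum_mono) (metis abs_ge_self abs_mult)
  also have "\<dots> \<le> L2_set r {..<k} * L2_set (\<lambda>_. 1 / sqrt k) {..<k}"
    by (rule L2_set_mult_ineq)
  also have "L2_set (\<lambda>_. 1 / sqrt k) {..<k} = 1"
    using k by (simp add: L2_set_constant)
  also have "L2_set r {..<k} * 1 = l2norm k (mat_apply k (\<lambda>i j. of_real (B i j)) v)"
    by (simp add: l2norm_def L2_set_def Bv)
  also have "\<dots> = l2norm m (mat_apply n (\<lambda>i j. if i < k \<and> j < k then of_real (B i j) else 0) v)"
    using k by (simp add: mat_apply_zero_extension l2norm_zero_extension)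
  also have "\<dots> \<le> mat_opnorm m n (\<lambda>i j. if i < k \<and> j < k then of_real (B i j) else 0 :: 'a)"
    using v by (intro l2norm_mat_apply_le_mat_opnorm) simp
  finally show ?thesis .
qed

lemma schur_norm_biadj_ge_block_sum:
  fixes X :: "nat \<Rightarrow> nat \<Rightarrow> real"
  assumes k: "0 < k" "k \<le> m" "k \<le> n" and X: "contraction k (\<lambda>i j. of_real (X i j) :: 'a)"
  shows "(\<Sum>i<k. \<Sum>j<k. biadj E i j * X i j) / k \<le> schur_norm m n (biadj E :: nat \<Rightarrow> nat \<Rightarrow> 'a::real_normed_field)"
proof -
  let ?X' = "\<lambda>i j. if i < k \<and> j < k then of_real (X i j) else 0 :: 'a"
  have "schur_prod (biadj E) ?X' = (\<lambda>i j. if i < k \<and> j < k then of_real (biadj E i j * X i j) else 0)"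
    by (simp add: schur_prod_def biadj_def fun_eq_iff)
  then have "(\<Sum>i<k. \<Sum>j<k. biadj E i j * X i j) / k \<le> mat_opnorm m n (schur_prod (biadj E) ?X')"
    using block_sum_le_mat_opnorm[OF k, of "\<lambda>i j. biadj E i j * X i j"] by simp
  also have "\<dots> \<le> schur_norm m n (biadj E :: nat \<Rightarrow> nat \<Rightarrow> 'a)"
    using mat_opnorm_zero_extension_le_1[OF X k(2,3)] by (rule mat_opnorm_schur_prod_le_schur_norm)
  finally show ?thesis .
qed

section \<open>Random sign matrices\<close>

definition sign_mat :: "(nat \<times> nat) set \<Rightarrow> nat \<Rightarrow> nat \<Rightarrow> real" where
  "sign_mat E i j = (if (i, j) \<in> E then 1 else -1)"

lemma biadj_eq_sign_mat: "(biadj E i j :: real) = (1 + sign_mat E i j) / 2"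
  by (simp add: biadj_def sign_mat_def)

lemma sign_mat_square: "sign_mat E i j * sign_mat E i j = 1"
  by (simp add: sign_mat_def)

lemma gram_sign_mat_diag: "gram k (sign_mat E) l l = k"
  by (simp add: gram_def mat_mult_def mat_transpose_def sign_mat_square)

lemma expect_G_half:
  "expect_G m n (1/2) f = (\<Sum>E\<in>Pow ({..<m} \<times> {..<n}). f E) / 2 ^ (m * n)"
proof -
  have "(1/2::real) ^ card E * (1 - 1/2) ^ (m * n - card E) = 1 / 2 ^ (m * n)"
    if "E \<in> Pow ({..<m} \<times> {..<n})" for E
  proof -
    have "card E \<le> m * n"
      using that card_mono[of "{..<m} \<times> {..<n}" E] by (auto simp: card_cartesian_product)
    then show ?thesis by (simp flip: power_add add: power_one_over)
  qed
  then show ?thesis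
    unfolding expect_G_def by (simp add: sum_divide_distrib)
qed

text \<open>Toggling \<open>p\<close> pairs off the subsets of \<open>U\<close>, on which \<open>h\<close> agrees.\<close>
lemma sum_Pow_signed_eq_0:
  fixes h :: "'a set \<Rightarrow> 'b::ring_1"
  assumes "finite U" "p \<in> U" and h: "\<And>A. h (A - {p}) = h A"
  shows "(\<Sum>E\<in>Pow U. (if p \<in> E then 1 else -1) * h E) = 0"
proof -
  define V where "V = U - {p}"
  have U: "U = insert p V" and p: "p \<notin> V" and V: "finite V"
    using assms by (auto simp: V_def)
  have inj: "inj_on (insert p) (Pow V)"
    using p by (auto simp: inj_on_def)
  have h_insert: "h (insert p E) = h E" if "E \<in> Pow V" for E
    using h[of "insert p E"] p that by (metis Diff_insert_absorb PowD in_mono)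
  have "(\<Sum>E\<in>Pow U. (if p \<in> E then 1 else -1) * h E)
      = (\<Sum>E\<in>Pow V. (if p \<in> E then 1 else -1) * h E)
        + (\<Sum>E\<in>insert p ` Pow V. (if p \<in> E then 1 else -1) * h E)"
    unfolding U Pow_insert using V p by (intro sum.union_disjoint) auto
  also have "\<dots> = - (\<Sum>E\<in>Pow V. h E) + (\<Sum>E\<in>Pow V. h E)"
    using p inj h_insert by (auto simp: sum.reindex sum_negf[symmetric] intro!: sum.cong)
  finally show ?thesis by simp
qed

lemma sum_Pow_sign_mat_4cycle:
  assumes "i < m" "i' < m" "j < n" "l < n"
  shows "(\<Sum>E\<in>Pow ({..<m} \<times> {..<n}).
            sign_mat E i j * sign_mat E i l * sign_mat E i' j * sign_mat E i' l)
       = (if i = i' \<or> j = l then 2 ^ (m * n) else 0)"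
proof (cases "i = i' \<or> j = l")
  case True
  then have "sign_mat E i j * sign_mat E i l * sign_mat E i' j * sign_mat E i' l = 1" for E
    by (auto simp: sign_mat_def)
  then show ?thesis
    using True by (simp add: card_Pow card_cartesian_product)
next
  case False
  let ?h = "\<lambda>E. sign_mat E i l * sign_mat E i' j * sign_mat E i' l"
  have "(\<Sum>E\<in>Pow ({..<m} \<times> {..<n}). (if (i, j) \<in> E then 1 else -1) * ?h E) = 0"
    using assms False by (intro sum_Pow_signed_eq_0) (auto simp: sign_mat_def)
  then show ?thesis
    using False by (simp add: sign_mat_def mult.assoc)
qed

lemma sum_Pow_gram_sign_mat_sq_le:
  assumes "k \<le> m" "k \<le> n"
  shows "(\<Sum>E\<in>Pow ({..<m} \<times> {..<n}). \<Sum>j<k. \<Sum>l<k. (gram k (sign_mat E) j l)\<^sup>2)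
       \<le> 2 * real k ^ 3 * 2 ^ (m * n)"
proof -
  let ?P = "Pow ({..<m} \<times> {..<n})" and ?C = "(2::real) ^ (m * n)"
  have sq: "(gram k (sign_mat E) j l)\<^sup>2 = (\<Sum>i<k. \<Sum>i'<k.
      sign_mat E i j * sign_mat E i l * sign_mat E i' j * sign_mat E i' l)" for E j l
    unfolding gram_def mat_mult_def mat_transpose_def power2_eq_square sum_product
    by (simp add: mult_ac)
  have "(\<Sum>E\<in>?P. \<Sum>j<k. \<Sum>l<k. (gram k (sign_mat E) j l)\<^sup>2)
      = (\<Sum>j<k. \<Sum>l<k. \<Sum>i<k. \<Sum>i'<k. \<Sum>E\<in>?P.
           sign_mat E i j * sign_mat E i l * sign_mat E i' j * sign_mat E i' l)"
    unfolding sq by (simp only: sum.swap[of _ ?P])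
  also have "\<dots> \<le> (\<Sum>j<k. \<Sum>l<k. \<Sum>i<k. \<Sum>i'<k. (if i = i' then ?C else 0) + (if j = l then ?C else 0))"
    using assms by (intro sum_mono) (auto simp: sum_Pow_sign_mat_4cycle)
  also have "\<dots> = 2 * real k ^ 3 * ?C"
    by (simp add: sum.distrib distrib_left if_distrib[of "\<lambda>x. real k * x"] power3_eq_cube)
  finally show ?thesis .
qed

section \<open>The expected Schur norm\<close>

lemma schur_norm_biadj_ge:
  assumes k: "0 < k" "k \<le> m" "k \<le> n" and s: "0 < s"
    and lift: "\<And>X. contraction k X \<Longrightarrow> contraction k (\<lambda>i j. of_real (X i j) :: 'a)"
  shows "- 1/2 + k / s - (\<Sum>j<k. \<Sum>l<k. (gram k (sign_mat E) j l)\<^sup>2) / (k * s ^ 3)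
    \<le> schur_norm m n (biadj E :: nat \<Rightarrow> nat \<Rightarrow> 'a::real_normed_field)"
proof -
  let ?S = "sign_mat E"
  define W where "W = (\<Sum>j<k. \<Sum>l<k. (gram k ?S j l)\<^sup>2)"
  obtain X where X: "contraction k X"
    and trace: "2 * s * (\<Sum>l<k. gram k ?S l l / s\<^sup>2 - (\<Sum>j<k. (gram k ?S j l)\<^sup>2) / s ^ 4)
      \<le> (\<Sum>l<k. \<Sum>i<k. ?S i l * X i l)"
    using exists_contraction_trace_ge[OF s] by blast
  have "(\<Sum>l<k. \<Sum>j<k. (gram k ?S j l)\<^sup>2) = W"
    unfolding W_def by (rule sum.swap)
  then have "2 * s * (\<Sum>l<k. gram k ?S l l / s\<^sup>2 - (\<Sum>j<k. (gram k ?S j l)\<^sup>2) / s ^ 4)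
      = 2 * s * (k * k / s\<^sup>2 - W / s ^ 4)"
    by (simp add: gram_sign_mat_diag sum_subtractf flip: sum_divide_distrib)
  also have "\<dots> = 2 * (real k)\<^sup>2 / s - 2 * W / s ^ 3"
    using s by (simp add: field_simps power2_eq_square power3_eq_cube power4_eq_xxxx)
  finally have "2 * (real k)\<^sup>2 / s - 2 * W / s ^ 3 \<le> (\<Sum>i<k. \<Sum>l<k. ?S i l * X i l)"
    using trace sum.swap[of "\<lambda>l i. ?S i l * X i l" "{..<k}" "{..<k}"] by linarith
  then have "(- real k + (2 * (real k)\<^sup>2 / s - 2 * W / s ^ 3)) / 2
      \<le> ((\<Sum>i<k. \<Sum>l<k. X i l) + (\<Sum>i<k. \<Sum>l<k. ?S i l * X i l)) / 2"
    using contraction_sum_ge[OF X] by (intro divide_right_mono add_mono) simp_all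
  also have "\<dots> = (\<Sum>i<k. \<Sum>l<k. biadj E i l * X i l)"
    by (simp add: biadj_eq_sign_mat algebra_simps sum.distrib flip: sum_divide_distrib)
  finally have "(- real k + (2 * (real k)\<^sup>2 / s - 2 * W / s ^ 3)) / 2 / k
      \<le> (\<Sum>i<k. \<Sum>l<k. biadj E i l * X i l) / k"
    by (rule divide_right_mono) simp
  also have "\<dots> \<le> schur_norm m n (biadj E :: nat \<Rightarrow> nat \<Rightarrow> 'a)"
    using k lift[OF X] by (rule schur_norm_biadj_ge_block_sum)
  finally show ?thesis
    using k s by (simp add: W_def field_simps power2_eq_square)
qed

lemma expect_schur_norm_biadj_ge:
  assumes lift: "\<And>k X. contraction k X \<Longrightarrow> contraction k (\<lambda>i j. of_real (X i j) :: 'a)"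
  shows "1/8 * sqrt (real (min m n) / 2) - 1
    \<le> expect_G m n (1/2) (\<lambda>E. schur_norm m n (biadj E :: nat \<Rightarrow> nat \<Rightarrow> 'a::real_normed_field))"
proof -
  define k where "k = min m n"
  define u where "u = sqrt (real k / 2)"
  let ?P = "Pow ({..<m} \<times> {..<n})" and ?N = "(2::real) ^ (m * n)"
  let ?f = "\<lambda>E. schur_norm m n (biadj E :: nat \<Rightarrow> nat \<Rightarrow> 'a)"
  let ?W = "\<lambda>E. \<Sum>j<k. \<Sum>l<k. (gram k (sign_mat E) j l)\<^sup>2"
  show ?thesis
  proof (cases "k = 0")
    case True
    have "0 \<le> (\<Sum>E\<in>?P. ?f E) / ?N"
      by (intro divide_nonneg_pos sum_nonneg schur_norm_nonneg) simp_all
    then show ?thesis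
      using True by (simp add: k_def expect_G_half)
  next
    case False
    then have k: "0 < k" "k \<le> m" "k \<le> n" by (auto simp: k_def)
    have u: "0 < u" "real k = 2 * u\<^sup>2" using k by (simp_all add: u_def)
    define s where "s = 4 * u"
    have s: "0 < s" using u by (simp add: s_def)
    have "?N * (- 1/2 + k / s) - 2 * real k ^ 3 * ?N / (k * s ^ 3)
        \<le> ?N * (- 1/2 + k / s) - (\<Sum>E\<in>?P. ?W E) / (k * s ^ 3)"
      using sum_Pow_gram_sign_mat_sq_le[OF k(2,3)] k s
      by (intro diff_left_mono divide_right_mono) auto
    also have "\<dots> = (\<Sum>E\<in>?P. - 1/2 + k / s - ?W E / (k * s ^ 3))"
      by (simp add: sum_subtractf card_Pow card_cartesian_product flip: sum_divide_distrib)
    also have "\<dots> \<le> (\<Sum>E\<in>?P. ?f E)"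
      using schur_norm_biadj_ge[OF k s lift] by (intro sum_mono)
    finally have "- 1/2 + k / s - 2 * real k ^ 2 / s ^ 3 \<le> (\<Sum>E\<in>?P. ?f E) / ?N"
      using k by (simp add: field_simps power3_eq_cube power2_eq_square)
    moreover have "- 1/2 + k / s - 2 * real k ^ 2 / s ^ 3 = - 1/2 + 3/8 * u"
      using u by (simp add: s_def field_simps power2_eq_square power3_eq_cube)
    ultimately show ?thesis
      using u by (simp add: expect_G_half k_def[symmetric] u_def[symmetric])
  qed
qed

theorem proposition8p4:
  fixes m n :: nat
  defines "k \<equiv> min m n"
  shows "expect_G m n (1/2) (\<lambda>E. graph_norm m n E TYPE(real)) \<ge> 1/8 * sqrt (real k / 2) - 1
       \<and> expect_G m n (1/2) (\<lambda>E. graph_norm m n E TYPE(complex)) \<ge> 1/8 * sqrt (real k / 2) - 1"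
proof -
  have "1/8 * sqrt (real k / 2) - 1 \<le> expect_G m n (1/2) (\<lambda>E. schur_norm m n (biadj E :: nat \<Rightarrow> nat \<Rightarrow> real))"
    unfolding k_def by (rule expect_schur_norm_biadj_ge) simp
  moreover have "1/8 * sqrt (real k / 2) - 1 \<le> expect_G m n (1/2) (\<lambda>E. schur_norm m n (biadj E :: nat \<Rightarrow> nat \<Rightarrow> complex))"
    unfolding k_def by (rule expect_schur_norm_biadj_ge) (rule contraction_of_real_complex)
  ultimately show ?thesis
    by (simp add: graph_norm_def)
qed

end
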